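(* Let $f(\mathbf z)=\sum_{\mathbf k}f_{\mathbf k}\mathbf z^{\mathbf k}$ be a power series in $g$ variables of order of magnitude $(A,\mathbf n)$. Let $u\ge0$ be an integer and $R_u(\mathbf z)=f(\mathbf z)-\sum_{|\mathbf k|_1\le u-1}f_{\mathbf k}\mathbf z^{\mathbf k}$ the remainder of order $u$. Let $0<R<1$. Then for all $\mathbf z\in P(\mathbf 0_g,R)$, $|R_u(\mathbf z)|\le B(u+1)^{(n+1)g}|\mathbf z|_\infty^u$, where $n=|\mathbf n|_\infty$ and $B=\frac{2\,\mathbf n!\,A\,g}{(1-R)^{g+|\mathbf n|_1}}$. Moreover, if $0<\kappa<1$ and $u\ge\max\left(\frac{16(ng)^2}{(\log R)^2},\frac{2(\log\kappa-\log B)}{\log R}\right)$, then $|R_u(\mathbf z)|\le\kappa$ for all $\mathbf z\in P(\mathbf 0_g,R)$.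
   Context: Multi-index notation; $|\mathbf x|_\infty=\max_k|x_k|$, $|\mathbf x|_1=\sum_k|x_k|$, $\mathbf n!=\prod n_m!$; $P(\mathbf 0_g,R)=D(0,R)^g$. A series has order of magnitude $(A,\mathbf n)$, with $A\ge1$ real and $\mathbf n=(n_1,\dots,n_g)$ integers $\ge1$, if $|f_{\mathbf k}|\le A\prod_m(k_m+1)^{n_m}$ for all $\mathbf k\in\mathbb N^g$. *)

theory Defs
  imports "HOL-Analysis.Analysis"
begin

definition mindex :: "nat \<Rightarrow> (nat \<Rightarrow> nat) set" where
  "mindex g = {k. \<forall>i\<ge>g. k i = 0}"

definition monom_g :: "nat \<Rightarrow> (nat \<Rightarrow> nat) \<Rightarrow> (nat \<Rightarrow> complex) \<Rightarrow> complex" where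
  "monom_g g k z = (\<Prod>m<g. z m ^ k m)"

definition order_of_magnitude ::
  "nat \<Rightarrow> ((nat \<Rightarrow> nat) \<Rightarrow> complex) \<Rightarrow> real \<Rightarrow> (nat \<Rightarrow> nat) \<Rightarrow> bool" where
  "order_of_magnitude g f A n \<longleftrightarrow> A \<ge> 1 \<and> (\<forall>m<g. n m \<ge> 1) \<and>
     (\<forall>k\<in>mindex g. norm (f k) \<le> A * (\<Prod>m<g. real (k m + 1) ^ n m))"

definition pseries :: "nat \<Rightarrow> ((nat \<Rightarrow> nat) \<Rightarrow> complex) \<Rightarrow> (nat \<Rightarrow> complex) \<Rightarrow> complex" where
  "pseries g f z = infsum (\<lambda>k. f k * monom_g g k z) (mindex g)"

text \<open>Remainder of order u: f(z) minus the sum over |k|_1 <= u-1 (i.e. |k|_1 < u).\<close>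
definition remainder_u ::
  "nat \<Rightarrow> ((nat \<Rightarrow> nat) \<Rightarrow> complex) \<Rightarrow> nat \<Rightarrow> (nat \<Rightarrow> complex) \<Rightarrow> complex" where
  "remainder_u g f u z = pseries g f z -
     (\<Sum>k\<in>{k\<in>mindex g. (\<Sum>m<g. k m) < u}. f k * monom_g g k z)"

definition polydisc :: "nat \<Rightarrow> real \<Rightarrow> (nat \<Rightarrow> complex) set" where
  "polydisc g R = {z. \<forall>m<g. norm (z m) < R}"

definition supnorm_g :: "nat \<Rightarrow> (nat \<Rightarrow> complex) \<Rightarrow> real" where
  "supnorm_g g z = Max ((\<lambda>m. norm (z m)) ` {..<g})"

end

theory Submission
  imports Defs
begin

(* Let r be the sup norm of z and w(k) = prod_m (k_m + 1)^(n_m), so that the term of index k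
   of R_u is bounded by A w(k) r^deg(k), deg being the total degree.  Every k with deg(k) >= u
   lies above some c with deg(c) = u, and then
   w(k) r^deg(k) <= (u + 1)^deg(n) r^u w(k - c) R^deg(k - c).  There are at most (u + 1)^g such c,
   and for each of them the sum over the shifts j = k - c is at most
   prod_m n_m! / (1 - R)^(n_m + 1), because (i + 1)^n <= n! binom(i + n, n) and
   sum_i binom(i + n, n) R^i = 1 / (1 - R)^(n + 1).  The second claim follows by taking
   logarithms, using ln (1 + u) <= sqrt u. *)

abbreviation mdeg :: "nat \<Rightarrow> (nat \<Rightarrow> nat) \<Rightarrow> nat" where
  "mdeg g k \<equiv> \<Sum>m<g. k m"

abbreviation mweight :: "nat \<Rightarrow> (nat \<Rightarrow> nat) \<Rightarrow> (nat \<Rightarrow> nat) \<Rightarrow> real" where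
  "mweight g n k \<equiv> \<Prod>m<g. real (k m + 1) ^ n m"

definition mindex_box :: "nat \<Rightarrow> nat \<Rightarrow> (nat \<Rightarrow> nat) set" where
  "mindex_box g M = {k\<in>mindex g. \<forall>m<g. k m \<le> M}"

lemma bij_betw_PiE_mindex_box:
  "bij_betw (\<lambda>e i. if i < g then e i else 0) (PiE {..<g} (\<lambda>_. {..M})) (mindex_box g M)"
proof (rule bij_betw_byWitness[where f' = "\<lambda>k. restrict k {..<g}"])
  show "\<forall>e\<in>PiE {..<g} (\<lambda>_. {..M}). restrict (\<lambda>i. if i < g then e i else 0) {..<g} = e"
    by (auto simp: PiE_def extensional_def fun_eq_iff)
  show "\<forall>k\<in>mindex_box g M. (\<lambda>i. if i < g then restrict k {..<g} i else 0) = k"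
    by (auto simp: mindex_box_def mindex_def fun_eq_iff)
  show "(\<lambda>e i. if i < g then e i else 0) ` PiE {..<g} (\<lambda>_. {..M}) \<subseteq> mindex_box g M"
    by (auto simp: mindex_box_def mindex_def PiE_def Pi_def)
  show "(\<lambda>k. restrict k {..<g}) ` mindex_box g M \<subseteq> PiE {..<g} (\<lambda>_. {..M})"
    by (rule image_subsetI) (simp add: mindex_box_def restrict_PiE_iff)
qed

lemma finite_mindex_box: "finite (mindex_box g M)"
  using bij_betw_finite[OF bij_betw_PiE_mindex_box] by (simp add: finite_PiE)

lemma card_mindex_box: "card (mindex_box g M) = (M + 1) ^ g"
  using bij_betw_same_card[OF bij_betw_PiE_mindex_box] by (simp add: card_PiE)

lemma sum_prod_mindex_box:
  fixes h :: "nat \<Rightarrow> nat \<Rightarrow> 'a::comm_semiring_1"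
  shows "(\<Sum>k\<in>mindex_box g M. \<Prod>m<g. h m (k m)) = (\<Prod>m<g. \<Sum>i\<le>M. h m i)"
proof -
  have "(\<Prod>m<g. \<Sum>i\<le>M. h m i) = (\<Sum>e\<in>PiE {..<g} (\<lambda>_. {..M}). \<Prod>m<g. h m (e m))"
    by (rule prod_sum_PiE) auto
  also have "\<dots> = (\<Sum>e\<in>PiE {..<g} (\<lambda>_. {..M}).
                     (\<lambda>k. \<Prod>m<g. h m (k m)) (\<lambda>i. if i < g then e i else 0))"
    by (intro sum.cong prod.cong) auto
  also have "\<dots> = (\<Sum>k\<in>mindex_box g M. \<Prod>m<g. h m (k m))"
    by (rule sum.reindex_bij_betw[OF bij_betw_PiE_mindex_box])
  finally show ?thesis by simp
qed

lemma coord_le_mdeg: "m < g \<Longrightarrow> k m \<le> mdeg g k"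
  by (rule member_le_sum) auto

lemma mindex_box_if_mdeg_le: "k \<in> mindex g \<Longrightarrow> mdeg g k \<le> M \<Longrightarrow> k \<in> mindex_box g M"
  unfolding mindex_box_def using coord_le_mdeg order_trans by blast

lemma finite_mindex_mdeg_le: "finite {k\<in>mindex g. mdeg g k \<le> M}"
  by (rule finite_subset[OF _ finite_mindex_box]) (auto intro: mindex_box_if_mdeg_le)

lemma card_mindex_mdeg_eq_le: "card {k\<in>mindex g. mdeg g k = M} \<le> (M + 1) ^ g"
  unfolding card_mindex_box[symmetric]
  by (intro card_mono finite_mindex_box) (auto intro: mindex_box_if_mdeg_le)

lemma obtain_mindex_le_with_mdeg:
  assumes "k \<in> mindex g" "u \<le> mdeg g k"
  obtains c where "c \<in> mindex g" "\<forall>m. c m \<le> k m" "mdeg g c = u"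
proof -
  have "\<exists>c\<in>mindex g. (\<forall>m. c m \<le> k m) \<and> mdeg g c = u"
    using assms(2)
  proof (induction u)
    case 0
    show ?case by (rule bexI[where x = "\<lambda>_. 0"]) (auto simp: mindex_def)
  next
    case (Suc u)
    then obtain c where c: "c \<in> mindex g" "\<forall>m. c m \<le> k m" "mdeg g c = u" by auto
    have "\<exists>m<g. c m < k m"
    proof (rule ccontr)
      assume "\<not> ?thesis"
      then have "mdeg g k \<le> mdeg g c" by (intro sum_mono) (meson lessThan_iff not_less)
      then show False using c Suc.prems by simp
    qed
    then obtain m0 where m0: "m0 < g" "c m0 < k m0" by auto
    define c' where "c' = (\<lambda>m. c m + (if m = m0 then 1 else 0))"
    have "c' \<in> mindex g" "\<forall>m. c' m \<le> k m"
      using c m0 by (auto simp: c'_def mindex_def Suc_le_eq)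
    moreover have "mdeg g c' = Suc u"
      using c m0 by (simp add: c'_def sum.distrib)
    ultimately show ?case by blast
  qed
  then show ?thesis using that by blast
qed

lemma power_Suc_le_fact_mult_choose: "(i + 1) ^ n \<le> fact n * ((i + n) choose n)"
proof (induction n)
  case 0
  then show ?case by simp
next
  case (Suc n)
  have "(i + 1) ^ Suc n \<le> Suc (i + n) * (fact n * ((i + n) choose n))"
    unfolding power_Suc using Suc.IH by (intro mult_mono) auto
  also have "\<dots> = fact n * (Suc (i + n) * ((i + n) choose n))"
    by (rule mult.left_commute)
  also have "\<dots> = fact (Suc n) * ((i + Suc n) choose Suc n)"
    by (metis Suc_times_binomial_eq fact_Suc mult.assoc mult.commute add_Suc_right of_nat_id)
  finally show ?case .
qed

lemma sum_choose_power_telescope: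
  fixes t :: real
  shows "(1 - t) * (\<Sum>i\<le>M. real ((i + n + 1) choose (n + 1)) * t ^ i)
           + real ((M + n + 1) choose (n + 1)) * t ^ (M + 1)
         = (\<Sum>i\<le>M. real ((i + n) choose n) * t ^ i)"
proof (induction M)
  case 0
  then show ?case by (simp add: algebra_simps)
next
  case (Suc M)
  have "real ((Suc M + n + 1) choose (n + 1))
        = real ((M + n + 1) choose n) + real ((M + n + 1) choose (n + 1))"
    by (simp add: binomial_Suc_Suc)
  with Suc.IH show ?case by (simp add: algebra_simps)
qed

lemma sum_choose_power_le:
  fixes t :: real
  assumes "0 \<le> t" "t < 1"
  shows "(\<Sum>i\<le>M. real ((i + n) choose n) * t ^ i) \<le> 1 / (1 - t) ^ (n + 1)"
proof (induction n)
  case 0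
  have "(1 - t) * (\<Sum>i\<le>M. t ^ i) \<le> 1"
    using sum_gp_basic[of t M] assms by simp
  then show ?case using assms by (simp add: pos_le_divide_eq mult.commute)
next
  case (Suc n)
  have "0 \<le> real ((M + n + 1) choose (n + 1)) * t ^ (M + 1)"
    using assms by simp
  then have "(1 - t) * (\<Sum>i\<le>M. real ((i + n + 1) choose (n + 1)) * t ^ i)
             \<le> (\<Sum>i\<le>M. real ((i + n) choose n) * t ^ i)"
    using sum_choose_power_telescope[where t = t and M = M and n = n] by linarith
  also have "\<dots> \<le> 1 / (1 - t) ^ (n + 1)" by (rule Suc.IH)
  finally have "(1 - t) * (\<Sum>i\<le>M. real ((i + n + 1) choose (n + 1)) * t ^ i) / (1 - t)
                \<le> 1 / (1 - t) ^ (n + 1) / (1 - t)"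
    using assms by (intro divide_right_mono) auto
  then show ?case using assms by (simp add: mult_ac)
qed

lemma sum_power_Suc_power_le:
  fixes t :: real
  assumes "0 \<le> t" "t < 1"
  shows "(\<Sum>i\<le>M. real (i + 1) ^ n * t ^ i) \<le> fact n / (1 - t) ^ (n + 1)"
proof -
  have "(\<Sum>i\<le>M. real (i + 1) ^ n * t ^ i) \<le> (\<Sum>i\<le>M. fact n * (real ((i + n) choose n) * t ^ i))"
  proof (rule sum_mono)
    fix i
    have "real (i + 1) ^ n \<le> fact n * real ((i + n) choose n)"
      using power_Suc_le_fact_mult_choose[of i n] by (metis of_nat_fact of_nat_le_iff of_nat_mult of_nat_power)
    then show "real (i + 1) ^ n * t ^ i \<le> fact n * (real ((i + n) choose n) * t ^ i)"
      using assms by (simp add: mult.assoc[symmetric] mult_right_mono)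
  qed
  also have "\<dots> = fact n * (\<Sum>i\<le>M. real ((i + n) choose n) * t ^ i)"
    by (simp add: sum_distrib_left)
  also have "\<dots> \<le> fact n / (1 - t) ^ (n + 1)"
    using mult_left_mono[OF sum_choose_power_le[OF assms], of "fact n"] by simp
  finally show ?thesis .
qed

lemma sum_mweight_power_mdeg_le:
  fixes t :: real
  assumes "0 \<le> t" "t < 1" "finite F" "F \<subseteq> mindex g"
  shows "(\<Sum>j\<in>F. mweight g n j * t ^ mdeg g j)
         \<le> real (\<Prod>m<g. fact (n m)) / (1 - t) ^ (g + mdeg g n)"
proof -
  define M where "M = (\<Sum>j\<in>F. mdeg g j)"
  have "F \<subseteq> mindex_box g M"
    unfolding M_def using assms(3,4) by (auto intro!: mindex_box_if_mdeg_le member_le_sum)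
  moreover have factor: "mweight g n j * t ^ mdeg g j = (\<Prod>m<g. real (j m + 1) ^ n m * t ^ j m)" for j
    by (simp add: prod.distrib power_sum)
  ultimately have "(\<Sum>j\<in>F. mweight g n j * t ^ mdeg g j)
        \<le> (\<Sum>j\<in>mindex_box g M. \<Prod>m<g. real (j m + 1) ^ n m * t ^ j m)"
    using assms(1) by (simp only: factor) (intro sum_mono2 finite_mindex_box prod_nonneg; simp)
  also have "\<dots> = (\<Prod>m<g. \<Sum>i\<le>M. real (i + 1) ^ n m * t ^ i)"
    by (rule sum_prod_mindex_box)
  also have "\<dots> \<le> (\<Prod>m<g. fact (n m) / (1 - t) ^ (n m + 1))"
    using assms(1,2) by (intro prod_mono conjI sum_power_Suc_power_le sum_nonneg) auto
  also have "\<dots> = real (\<Prod>m<g. fact (n m)) / (1 - t) ^ (\<Sum>m<g. n m + 1)"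
    by (simp add: prod_dividef power_sum of_nat_prod)
  also have "(\<Sum>m<g. n m + 1) = g + mdeg g n"
    unfolding sum.distrib by simp
  finally show ?thesis .
qed

lemma mweight_power_mdeg_split_le:
  fixes r t :: real
  assumes "\<forall>m. c m \<le> k m" "mdeg g c = u" "0 \<le> r" "r \<le> t"
  defines "j \<equiv> \<lambda>m. k m - c m"
  shows "mweight g n k * r ^ mdeg g k
         \<le> real (u + 1) ^ mdeg g n * r ^ u * (mweight g n j * t ^ mdeg g j)"
proof -
  have "real (k m + 1) \<le> real (u + 1) * real (j m + 1)" if "m < g" for m
  proof -
    have "k m \<le> u + j m" using coord_le_mdeg[OF that, of c] assms(1,2) by (simp add: j_def)
    then show ?thesis by (simp flip: of_nat_mult add: algebra_simps)
  qed
  then have "mweight g n k \<le> (\<Prod>m<g. (real (u + 1) * real (j m + 1)) ^ n m)"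
    by (intro prod_mono conjI power_mono) auto
  also have "\<dots> = real (u + 1) ^ mdeg g n * mweight g n j"
    by (simp add: power_mult_distrib prod.distrib power_sum)
  finally have weight: "mweight g n k \<le> real (u + 1) ^ mdeg g n * mweight g n j" .
  have "mdeg g k = mdeg g c + mdeg g j"
    unfolding sum.distrib[symmetric] j_def using assms(1) by (intro sum.cong) auto
  then have "mdeg g k = u + mdeg g j"
    using assms(2) by simp
  then have power: "r ^ mdeg g k \<le> r ^ u * t ^ mdeg g j"
    using assms(3,4) by (simp add: power_add mult_left_mono power_mono)
  show ?thesis
    using mult_mono[OF weight power] assms(3) by (simp add: prod_nonneg mult_ac)
qed

lemma sum_mweight_power_mdeg_shift_le:
  fixes t :: real
  assumes "0 \<le> t" "t < 1" "finite F" "F \<subseteq> mindex g"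
  shows "(\<Sum>k\<in>{k\<in>F. \<forall>m. c m \<le> k m}.
            mweight g n (\<lambda>m. k m - c m) * t ^ mdeg g (\<lambda>m. k m - c m))
         \<le> real (\<Prod>m<g. fact (n m)) / (1 - t) ^ (g + mdeg g n)"
proof -
  let ?S = "{k\<in>F. \<forall>m. c m \<le> k m}" and ?shift = "\<lambda>k m. k m - c m"
  have "inj_on ?shift ?S"
    by (rule inj_onI) (metis (no_types, lifting) ext le_add_diff_inverse mem_Collect_eq)
  then have "(\<Sum>k\<in>?S. mweight g n (?shift k) * t ^ mdeg g (?shift k))
             = (\<Sum>j\<in>?shift ` ?S. mweight g n j * t ^ mdeg g j)"
    by (simp add: sum.reindex)
  also have "\<dots> \<le> real (\<Prod>m<g. fact (n m)) / (1 - t) ^ (g + mdeg g n)"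
    using assms by (intro sum_mweight_power_mdeg_le) (auto simp: mindex_def)
  finally show ?thesis .
qed

lemma sum_tail_mweight_power_mdeg_le:
  fixes r t :: real
  assumes "0 \<le> r" "r \<le> t" "t < 1" "finite F" "F \<subseteq> {k\<in>mindex g. u \<le> mdeg g k}"
  shows "(\<Sum>k\<in>F. mweight g n k * r ^ mdeg g k)
         \<le> real (u + 1) ^ (g + mdeg g n) * r ^ u
            * (real (\<Prod>m<g. fact (n m)) / (1 - t) ^ (g + mdeg g n))"
proof -
  define C where "C = {c\<in>mindex g. mdeg g c = u}"
  define D where "D = real (u + 1) ^ mdeg g n * r ^ u"
  define K where "K = real (\<Prod>m<g. fact (n m)) / (1 - t) ^ (g + mdeg g n)"
  define b where "b = (\<lambda>k c. mweight g n (\<lambda>m. k m - c m) * t ^ mdeg g (\<lambda>m. k m - c m))"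
  have "finite C"
    unfolding C_def by (rule finite_subset[OF _ finite_mindex_mdeg_le[of g u]]) auto
  have "D \<ge> 0" "K \<ge> 0" "\<And>k c. b k c \<ge> 0"
    using assms(1-3) by (simp_all add: D_def K_def b_def prod_nonneg)
  have "(\<Sum>k\<in>F. mweight g n k * r ^ mdeg g k) \<le> (\<Sum>k\<in>F. \<Sum>c\<in>{c\<in>C. \<forall>m. c m \<le> k m}. D * b k c)"
  proof (rule sum_mono)
    fix k assume "k \<in> F"
    with assms(5) obtain c where c: "c \<in> mindex g" "\<forall>m. c m \<le> k m" "mdeg g c = u"
      using obtain_mindex_le_with_mdeg by blast
    have "mweight g n k * r ^ mdeg g k \<le> D * b k c"
      using mweight_power_mdeg_split_le[OF c(2,3) assms(1,2)] by (simp add: D_def b_def)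
    also have "\<dots> \<le> (\<Sum>c\<in>{c\<in>C. \<forall>m. c m \<le> k m}. D * b k c)"
    proof (rule member_le_sum)
      show "c \<in> {c\<in>C. \<forall>m. c m \<le> k m}" using c by (simp add: C_def)
    qed (use \<open>finite C\<close> \<open>D \<ge> 0\<close> \<open>\<And>k c. b k c \<ge> 0\<close> in auto)
    finally show "mweight g n k * r ^ mdeg g k \<le> (\<Sum>c\<in>{c\<in>C. \<forall>m. c m \<le> k m}. D * b k c)" .
  qed
  also have "\<dots> = (\<Sum>c\<in>C. \<Sum>k\<in>{k\<in>F. \<forall>m. c m \<le> k m}. D * b k c)"
    using assms(4) \<open>finite C\<close> by (rule sum.swap_restrict)
  also have "\<dots> \<le> (\<Sum>c\<in>C. D * K)"
    using assms(1-5) \<open>D \<ge> 0\<close> unfolding b_def K_def sum_distrib_left[symmetric]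
    by (intro sum_mono mult_left_mono sum_mweight_power_mdeg_shift_le) auto
  also have "\<dots> \<le> real ((u + 1) ^ g) * (D * K)"
    using card_mindex_mdeg_eq_le[of g u] \<open>D \<ge> 0\<close> \<open>K \<ge> 0\<close>
    by (simp add: C_def mult_right_mono del: of_nat_power)
  finally show ?thesis
    by (simp add: D_def K_def power_add mult_ac)
qed

lemma norm_le_supnorm_g: "m < g \<Longrightarrow> norm (z m) \<le> supnorm_g g z"
  unfolding supnorm_g_def by (rule Max_ge) auto

lemma supnorm_g_nonneg: "g \<ge> 1 \<Longrightarrow> 0 \<le> supnorm_g g z"
  by (rule order_trans[OF norm_ge_zero norm_le_supnorm_g[of 0]]) simp

lemma supnorm_g_less: "g \<ge> 1 \<Longrightarrow> z \<in> polydisc g R \<Longrightarrow> supnorm_g g z < R"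
  unfolding supnorm_g_def polydisc_def by (subst Max_less_iff) (auto simp: lessThan_empty_iff)

lemma norm_monom_g_le: "norm (monom_g g k z) \<le> supnorm_g g z ^ mdeg g k"
proof -
  have "norm (monom_g g k z) = (\<Prod>m<g. norm (z m) ^ k m)"
    by (simp add: monom_g_def prod_norm[symmetric] norm_power)
  also have "\<dots> \<le> (\<Prod>m<g. supnorm_g g z ^ k m)"
    by (intro prod_mono conjI power_mono norm_le_supnorm_g) auto
  finally show ?thesis by (simp add: power_sum)
qed

lemma bounded_finite_norm_sums_summable:
  fixes \<phi> :: "'a \<Rightarrow> 'b::banach"
  assumes "\<And>F. finite F \<Longrightarrow> F \<subseteq> T \<Longrightarrow> (\<Sum>x\<in>F. norm (\<phi> x)) \<le> b"
  shows "\<phi> summable_on T" and "norm (infsum \<phi> T) \<le> b"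
proof -
  have "bdd_above (sum (\<lambda>x. norm (\<phi> x)) ` {F. F \<subseteq> T \<and> finite F})"
    using assms by (intro bdd_aboveI[where M = b]) blast
  then have norm_summable: "(\<lambda>x. norm (\<phi> x)) summable_on T"
    by (intro nonneg_bdd_above_summable_on) auto
  then show "\<phi> summable_on T"
    by (rule abs_summable_summable)
  have "norm (infsum \<phi> T) \<le> infsum (\<lambda>x. norm (\<phi> x)) T"
    by (rule norm_infsum_bound[OF norm_summable])
  also have "\<dots> \<le> b"
    using norm_summable assms by (rule infsum_le_finite_sums)
  finally show "norm (infsum \<phi> T) \<le> b" .
qed

lemma remainder_u_eq_infsum_tail:
  assumes "(\<lambda>k. f k * monom_g g k z) summable_on mindex g"
  shows "remainder_u g f u z = infsum (\<lambda>k. f k * monom_g g k z) {k\<in>mindex g. u \<le> mdeg g k}"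
proof -
  let ?\<phi> = "\<lambda>k. f k * monom_g g k z"
  let ?S = "{k\<in>mindex g. mdeg g k < u}" and ?T = "{k\<in>mindex g. u \<le> mdeg g k}"
  have "finite ?S"
    by (rule finite_subset[OF _ finite_mindex_mdeg_le[of g u]]) auto
  have "mindex g = ?S \<union> ?T" by auto
  then have "pseries g f z = infsum ?\<phi> (?S \<union> ?T)"
    by (simp add: pseries_def)
  also have "\<dots> = infsum ?\<phi> ?S + infsum ?\<phi> ?T"
    by (rule infsum_Un_disjoint) (auto intro: summable_on_subset_banach[OF assms])
  finally show ?thesis
    using \<open>finite ?S\<close> by (simp add: remainder_u_def)
qed

lemma norm_remainder_u_le:
  assumes "g \<ge> 1" "order_of_magnitude g f A n" "0 < R" "R < 1" "z \<in> polydisc g R"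
  shows "norm (remainder_u g f u z)
         \<le> A * real (\<Prod>m<g. fact (n m)) / (1 - R) ^ (g + mdeg g n)
            * real (u + 1) ^ (g + mdeg g n) * supnorm_g g z ^ u"
proof -
  let ?\<phi> = "\<lambda>k. f k * monom_g g k z" and ?r = "supnorm_g g z"
  define K where "K = real (\<Prod>m<g. fact (n m)) / (1 - R) ^ (g + mdeg g n)"
  have "A \<ge> 0"
    using assms(2) by (simp add: order_of_magnitude_def)
  have "0 \<le> ?r" "?r \<le> R"
    using assms(1,5) by (simp_all add: supnorm_g_nonneg supnorm_g_less less_imp_le)
  have norm_term: "norm (?\<phi> k) \<le> A * (mweight g n k * ?r ^ mdeg g k)" if "k \<in> mindex g" for k
  proof -
    have "norm (f k) \<le> A * mweight g n k"
      using assms(2) that by (simp add: order_of_magnitude_def)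
    with norm_monom_g_le[of g k z] \<open>A \<ge> 0\<close> show ?thesis
      unfolding norm_mult mult.assoc[symmetric] by (intro mult_mono) (auto intro!: mult_nonneg_nonneg prod_nonneg)
  qed
  have tail: "(\<Sum>k\<in>F. norm (?\<phi> k)) \<le> A * (real (v + 1) ^ (g + mdeg g n) * ?r ^ v * K)"
    if "finite F" "F \<subseteq> {k\<in>mindex g. v \<le> mdeg g k}" for F v
  proof -
    have "(\<Sum>k\<in>F. norm (?\<phi> k)) \<le> A * (\<Sum>k\<in>F. mweight g n k * ?r ^ mdeg g k)"
      unfolding sum_distrib_left using that norm_term by (intro sum_mono) auto
    also have "\<dots> \<le> A * (real (v + 1) ^ (g + mdeg g n) * ?r ^ v * K)"
      unfolding K_def using that assms(4) \<open>0 \<le> ?r\<close> \<open>?r \<le> R\<close> \<open>A \<ge> 0\<close>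
      by (intro mult_left_mono sum_tail_mweight_power_mdeg_le) auto
    finally show ?thesis .
  qed
  have "?\<phi> summable_on mindex g"
    using tail[of _ 0] by (intro bounded_finite_norm_sums_summable(1)) auto
  then have "remainder_u g f u z = infsum ?\<phi> {k\<in>mindex g. u \<le> mdeg g k}"
    by (rule remainder_u_eq_infsum_tail)
  then show ?thesis
    using bounded_finite_norm_sums_summable(2)[OF tail[of _ u]] by (simp add: K_def mult_ac)
qed

lemma order_of_magnitude_Max_ge_1:
  assumes "g \<ge> 1" "order_of_magnitude g f A n"
  shows "1 \<le> Max (n ` {..<g})"
proof -
  have "1 \<le> n 0"
    using assms by (simp add: order_of_magnitude_def)
  also have "n 0 \<le> Max (n ` {..<g})"
    using assms(1) by (intro Max_ge) auto
  finally show ?thesis .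
qed

lemma order_of_magnitude_exponent_le:
  assumes "g \<ge> 1" "order_of_magnitude g f A n"
  shows "g + mdeg g n \<le> (Max (n ` {..<g}) + 1) * g"
proof -
  have "mdeg g n \<le> g * Max (n ` {..<g})"
    using sum_bounded_above[of "{..<g}" n "Max (n ` {..<g})"] by simp
  then show ?thesis
    by (simp add: algebra_simps)
qed

lemma ln_one_plus_le_sqrt:
  fixes x :: real
  assumes "0 \<le> x"
  shows "ln (1 + x) \<le> sqrt x"
proof -
  let ?h = "\<lambda>s::real. s - ln (1 + s\<^sup>2)"
  have "?h 0 \<le> ?h (sqrt x)"
  proof (rule DERIV_nonneg_imp_nondecreasing[where f = ?h])
    fix s :: real
    have "0 < 1 + s\<^sup>2"
      by (simp add: add_pos_nonneg)
    then have "(?h has_real_derivative 1 - 2 * s / (1 + s\<^sup>2)) (at s)"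
      by (auto intro!: derivative_eq_intros simp: power2_eq_square)
    moreover have "2 * s / (1 + s\<^sup>2) \<le> 1"
      using \<open>0 < 1 + s\<^sup>2\<close> sum_squares_ge_zero[of "s - 1" 0]
      by (simp add: divide_le_eq power2_eq_square algebra_simps)
    ultimately show "\<exists>y. (?h has_real_derivative y) (at s) \<and> 0 \<le> y"
      by auto
  qed (use assms in simp)
  then show ?thesis
    using assms by simp
qed

lemma power_mult_geometric_le:
  fixes B R \<kappa> P :: real and N u :: nat
  assumes "0 < B" "0 < R" "R < 1" "0 < \<kappa>" "0 \<le> P" "real N \<le> 2 * P"
    and "16 * P\<^sup>2 / (ln R)\<^sup>2 \<le> real u" "2 * (ln \<kappa> - ln B) / ln R \<le> real u"
  shows "B * real (u + 1) ^ N * R ^ u \<le> \<kappa>"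
proof -
  define L where "L = - ln R"
  have "0 < L"
    using assms(2,3) by (simp add: L_def)
  have "sqrt ((4 * P)\<^sup>2) \<le> sqrt (real u * L\<^sup>2)"
    using assms(7) \<open>0 < L\<close> by (intro real_sqrt_le_mono) (simp add: L_def field_simps)
  then have "4 * P \<le> sqrt (real u) * L"
    using assms(5) \<open>0 < L\<close> by (simp add: real_sqrt_mult)
  have "real N * ln (1 + real u) \<le> 2 * P * sqrt (real u)"
    using assms(5,6) ln_one_plus_le_sqrt[of "real u"] by (intro mult_mono) auto
  also have "\<dots> \<le> (sqrt (real u) * L / 2) * sqrt (real u)"
    using \<open>4 * P \<le> sqrt (real u) * L\<close> by (intro mult_right_mono) auto
  also have "\<dots> = real u * L / 2"
    by (simp flip: power2_eq_square)
  finally have "real N * ln (1 + real u) \<le> real u * L / 2" .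
  moreover have "- (real u * L) \<le> 2 * ln \<kappa> - 2 * ln B"
    using assms(8) \<open>0 < L\<close> by (simp add: L_def neg_divide_le_eq mult.commute)
  moreover have "ln (B * real (u + 1) ^ N * R ^ u) = ln B + real N * ln (1 + real u) - real u * L"
    using assms(1,2) by (simp add: ln_mult ln_realpow L_def add.commute)
  ultimately have "ln (B * real (u + 1) ^ N * R ^ u) \<le> ln \<kappa>"
    by linarith
  then show ?thesis
    using assms(1,2,4) by simp
qed

theorem mainTheorem15:
  fixes g :: nat and f :: "(nat \<Rightarrow> nat) \<Rightarrow> complex" and A R :: real
    and n :: "nat \<Rightarrow> nat" and u :: nat
  assumes "g \<ge> 1"
    and "order_of_magnitude g f A n"
    and "0 < R" and "R < 1"
  defines "nmax \<equiv> Max (n ` {..<g})"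
    and "B \<equiv> 2 * real (\<Prod>m<g. fact (n m)) * A * real g
              / (1 - R) ^ (g + (\<Sum>m<g. n m))"
  shows "(\<forall>z\<in>polydisc g R.
            norm (remainder_u g f u z) \<le> B * real (u + 1) ^ ((nmax + 1) * g) * supnorm_g g z ^ u)
       \<and> (\<forall>\<kappa>::real. 0 < \<kappa> \<and> \<kappa> < 1 \<and>
            real u \<ge> max (16 * (real nmax * real g)^2 / (ln R)^2) (2 * (ln \<kappa> - ln B) / ln R)
            \<longrightarrow> (\<forall>z\<in>polydisc g R. norm (remainder_u g f u z) \<le> \<kappa>))"
proof -
  let ?N = "(nmax + 1) * g"
  define Q where "Q = A * real (\<Prod>m<g. fact (n m)) / (1 - R) ^ (g + mdeg g n)"
  have "0 < Q" "B = 2 * real g * Q"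
    using assms(2-4) by (simp_all add: Q_def B_def order_of_magnitude_def prod_pos)
  then have "0 < B"
    using assms(1) by simp
  have "real ?N \<le> 2 * (real nmax * real g)"
    using order_of_magnitude_Max_ge_1[OF assms(1,2), folded nmax_def]
      mult_right_mono[of 1 "real nmax" "real g"] by (simp add: algebra_simps)
  have bound: "norm (remainder_u g f u z) \<le> B * real (u + 1) ^ ?N * supnorm_g g z ^ u"
    if "z \<in> polydisc g R" for z
  proof -
    have "norm (remainder_u g f u z) \<le> Q * real (u + 1) ^ (g + mdeg g n) * supnorm_g g z ^ u"
      using norm_remainder_u_le[OF assms(1-4) that] by (simp add: Q_def)
    also have "\<dots> \<le> B * real (u + 1) ^ ?N * supnorm_g g z ^ u"
    proof (rule mult_right_mono)
      show "Q * real (u + 1) ^ (g + mdeg g n) \<le> B * real (u + 1) ^ ?N"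
        using \<open>0 < Q\<close> \<open>B = 2 * real g * Q\<close> assms(1)
          order_of_magnitude_exponent_le[OF assms(1,2), folded nmax_def]
        by (intro mult_mono power_increasing) auto
    qed (use assms(1) supnorm_g_nonneg in auto)
    finally show ?thesis .
  qed
  moreover have "norm (remainder_u g f u z) \<le> \<kappa>"
    if "0 < \<kappa>" "real u \<ge> max (16 * (real nmax * real g)\<^sup>2 / (ln R)\<^sup>2) (2 * (ln \<kappa> - ln B) / ln R)"
      and "z \<in> polydisc g R" for \<kappa> z
  proof -
    have "B * real (u + 1) ^ ?N * supnorm_g g z ^ u \<le> B * real (u + 1) ^ ?N * R ^ u"
      using \<open>0 < B\<close> assms(1) that(3)
      by (intro mult_left_mono power_mono) (auto simp: supnorm_g_nonneg supnorm_g_less less_imp_le)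
    also have "\<dots> \<le> \<kappa>"
      using that(2) by (intro power_mult_geometric_le[OF \<open>0 < B\<close> assms(3,4) that(1) _
          \<open>real ?N \<le> 2 * (real nmax * real g)\<close>]) simp_all
    finally show ?thesis
      using bound[OF that(3)] by linarith
  qed
  ultimately show ?thesis
    by blast
qed

end
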